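(* Let $\kappa=(a,b,c,d)\in[-2,2]^4$, $\rho\in\mathcal H_\kappa$, and $(x,y,z)=(\operatorname{tr}\rho(AB),\operatorname{tr}\rho(BC),\operatorname{tr}\rho(CA))$. If $\rho$ is a $\mathrm{Pin}(2)$-representation but not a $\mathrm{Spin}(2)$-representation, then one of the following holds: (1) $\kappa=(0,0,0,0)$; (2) one of the following six conditions holds: $a=b=0$ and $y=z=0$; $c=d=0$ and $y=z=0$; $a=c=0$ and $x=y=0$; $b=d=0$ and $x=y=0$; $a=d=0$ and $x=z=0$; $b=c=0$ and $x=z=0$. Conversely, if $\rho\in\mathcal H_\kappa$ satisfies (1) or (2), then $\rho$ is a $\mathrm{Pin}(2)$-representation.
   Context: $M$ is a four-holed sphere with $\pi_1(M)=\langle A,B,C,D : ABCD=I\rangle$, $A,B,C,D$ the boundary classes. For $\kappa=(a,b,c,d)\in[-2,2]^4$, $\mathcal H_\kappa$ is the set of homomorphisms $\rho:\pi_1(M)\to\mathrm{SU}(2)$ with $\operatorname{tr}\rho(A)=a$, $\operatorname{tr}\rho(B)=b$, $\operatorname{tr}\rho(C)=c$, $\operatorname{tr}\rho(D)=d$. Let $p:\mathrm{SU}(2)\to\mathrm{SO}(3)$ be the double cover; $\mathrm{Pin}(2)=p^{-1}(\mathrm{O}(2))$, which has two components $\mathrm{Spin}(2)\cup\mathrm{Spin}_-(2)$, where $\mathrm{Spin}(2)$ is the identity component, the circle $\{e^{i\theta}\}$ with $e^{i\theta}=\begin{pmatrix}\cos\theta&\sin\theta\\-\sin\theta&\cos\theta\end{pmatrix}$,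 and $\mathrm{Spin}_-(2)$ is the other component (e.g. containing $\iota=\begin{pmatrix}i&0\\0&-i\end{pmatrix}$); all elements of $\mathrm{Spin}_-(2)$ have trace $0$. For a subgroup $G\subset\mathrm{SU}(2)$, $\rho$ is called a $G$-representation if some $\mathrm{SU}(2)$-conjugate of $\rho$ has image contained in $G$. *)

theory Defs
  imports "HOL-Analysis.Analysis"
begin

type_synonym cmat2 = "complex^2^2"

definition mat2 :: "complex \<Rightarrow> complex \<Rightarrow> complex \<Rightarrow> complex \<Rightarrow> cmat2" where
  "mat2 p q r s = (\<chi> i j. if i = 1 then (if j = 1 then p else q) else (if j = 1 then r else s))"

definition ctrans :: "cmat2 \<Rightarrow> cmat2" where
  "ctrans M = (\<chi> i j. cnj (M $ j $ i))"

definition SU2 :: "cmat2 set" where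
  "SU2 = {M. M ** ctrans M = mat 1 \<and> det M = 1}"

definition eith :: "real \<Rightarrow> cmat2" where
  "eith \<theta> = mat2 (cos \<theta>) (sin \<theta>) (- sin \<theta>) (cos \<theta>)"

definition iota :: cmat2 where
  "iota = mat2 \<i> 0 0 (- \<i>)"

definition Spin2 :: "cmat2 set" where
  "Spin2 = range eith"

definition Spin2_minus :: "cmat2 set" where
  "Spin2_minus = (\<lambda>\<theta>. iota ** eith \<theta>) ` UNIV"

definition Pin2 :: "cmat2 set" where
  "Pin2 = Spin2 \<union> Spin2_minus"

text \<open>Image of the representation of pi_1(M) = <A,B,C,D | ABCD = I> determined by the
  images of the generators: the subgroup of SU(2) generated by them.\<close>
inductive_set rep_image :: "cmat2 \<Rightarrow> cmat2 \<Rightarrow> cmat2 \<Rightarrow> cmat2 \<Rightarrow> cmat2 set"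
  for A B C D where
  one: "mat 1 \<in> rep_image A B C D"
| mul: "g \<in> rep_image A B C D \<Longrightarrow> X \<in> {A, B, C, D} \<Longrightarrow> g ** X \<in> rep_image A B C D"
| mulinv: "g \<in> rep_image A B C D \<Longrightarrow> X \<in> {A, B, C, D} \<Longrightarrow> g ** ctrans X \<in> rep_image A B C D"

definition is_G_rep :: "cmat2 set \<Rightarrow> cmat2 \<Rightarrow> cmat2 \<Rightarrow> cmat2 \<Rightarrow> cmat2 \<Rightarrow> bool" where
  "is_G_rep G A B C D \<longleftrightarrow>
     (\<exists>g \<in> SU2. \<forall>h \<in> rep_image A B C D. g ** h ** ctrans g \<in> G)"

text \<open>Homomorphisms pi_1(M) -> SU(2) with boundary traces kappa = (a,b,c,d),
  given by the images (A,B,C,D) of the generators.\<close>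
definition H_kappa :: "real \<Rightarrow> real \<Rightarrow> real \<Rightarrow> real \<Rightarrow> (cmat2 \<times> cmat2 \<times> cmat2 \<times> cmat2) set" where
  "H_kappa a b c d = {(A, B, C, D). A \<in> SU2 \<and> B \<in> SU2 \<and> C \<in> SU2 \<and> D \<in> SU2 \<and>
      A ** B ** C ** D = mat 1 \<and>
      trace A = complex_of_real a \<and> trace B = complex_of_real b \<and>
      trace C = complex_of_real c \<and> trace D = complex_of_real d}"

end

theory Submission
  imports Defs
begin

(* Identify SU(2) with the unit quaternions, quat w v = w + v1 i + v2 j + v3 k, so that
   trace (quat w v) = 2 w.  Spin(2) consists of the unit quaternions in span {1, j} and Spin_-(2)
   of those in span {i, k}; membership in Spin_-(2) is a Z/2-grading of Pin(2), and odd elements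
   are traceless.

   If a conjugate of rho lies in Pin(2) but not in Spin(2), the grading of A, B, C, D is not
   identically even, while its sum is even because ABCD = 1.  So either all four generators are
   odd, or exactly two are, and then two of AB, BC, CA are odd as well; this is the trace condition.

   Conversely, traceless elements of SU(2) are pure quaternions, and for pure p, q, r and any s,
   trace (p s) = -2 p.s and trace (p q r) = -2 det (p, q, r) on vector parts.  Hence each case of
   the condition provides a nonzero axis n orthogonal to two pure generators and parallel to the
   vector part of a third (orthogonal to three pure generators when kappa = 0).  Conjugating n onto
   the j-axis moves these three generators into Pin(2), and the fourth follows from ABCD = 1. *)

unbundle cross3_syntax

lemma mat2_nth [simp]:
  "mat2 p q r s $ 1 $ 1 = p" "mat2 p q r s $ 1 $ 2 = q"
  "mat2 p q r s $ 2 $ 1 = r" "mat2 p q r s $ 2 $ 2 = s"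
  by (simp_all add: mat2_def)

lemma mat2_cases: obtains p q r s where "M = mat2 p q r s"
proof
  show "M = mat2 (M$1$1) (M$1$2) (M$2$1) (M$2$2)"
    by (simp add: mat2_def vec_eq_iff forall_2)
qed

lemma mat2_eq_iff [simp]:
  "mat2 p q r s = mat2 p' q' r' s' \<longleftrightarrow> p = p' \<and> q = q' \<and> r = r' \<and> s = s'"
  by (metis mat2_nth)

lemma mat2_mult: "mat2 p q r s ** mat2 p' q' r' s' =
    mat2 (p * p' + q * r') (p * q' + q * s') (r * p' + s * r') (r * q' + s * s')"
  by (simp add: mat2_def matrix_matrix_mult_def vec_eq_iff forall_2 sum_2)

lemma mat2_one: "mat 1 = mat2 1 0 0 1"
  by (simp add: mat2_def mat_def vec_eq_iff forall_2)

lemma ctrans_mat2: "ctrans (mat2 p q r s) = mat2 (cnj p) (cnj r) (cnj q) (cnj s)"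
  by (simp add: mat2_def ctrans_def vec_eq_iff forall_2)

lemma det_mat2: "det (mat2 p q r s) = p * s - q * r"
  by (simp add: det_2)

lemma trace_mat2: "trace (mat2 p q r s) = p + s"
  by (simp add: trace_def sum_2)

lemma ctrans_mult:
  fixes X Y :: cmat2
  shows "ctrans (X ** Y) = ctrans Y ** ctrans X"
  by (cases X rule: mat2_cases, cases Y rule: mat2_cases)
    (simp add: mat2_mult ctrans_mat2 algebra_simps)

lemma ctrans_ctrans [simp]:
  fixes X :: cmat2
  shows "ctrans (ctrans X) = X"
  by (cases X rule: mat2_cases) (simp add: ctrans_mat2)

definition quat :: "real \<Rightarrow> real^3 \<Rightarrow> cmat2" where
  "quat w v =
     mat2 (Complex w (v$1)) (Complex (v$2) (v$3)) (Complex (- v$2) (v$3)) (Complex w (- v$1))"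

lemma quat_eq_iff [simp]: "quat w v = quat w' v' \<longleftrightarrow> w = w' \<and> v = v'"
  unfolding quat_def mat2_eq_iff by (auto simp: complex_eq_iff vec_eq_iff forall_3)

lemma quat_mult:
  "quat w v ** quat w' v' = quat (w * w' - v \<bullet> v') (w *\<^sub>R v' + w' *\<^sub>R v + v \<times> v')"
  by (simp add: quat_def mat2_mult complex_eq_iff inner_vec_def sum_3 cross3_def algebra_simps)

lemma ctrans_quat: "ctrans (quat w v) = quat w (- v)"
  by (simp add: quat_def ctrans_mat2 complex_eq_iff)

lemma trace_quat: "trace (quat w v) = of_real (2 * w)"
  by (simp add: quat_def trace_mat2 complex_eq_iff)

lemma mat_1_quat: "mat 1 = quat 1 0"
  by (simp add: quat_def mat2_one complex_eq_iff)

lemma SU2_iff_quat: "M \<in> SU2 \<longleftrightarrow> (\<exists>w v. M = quat w v \<and> w\<^sup>2 + v \<bullet> v = 1)"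
proof
  assume "M \<in> SU2"
  then have unitary: "M ** ctrans M = mat 1" and det: "det M = 1" by (auto simp: SU2_def)
  obtain p q r s where M: "M = mat2 p q r s" by (rule mat2_cases)
  from unitary have e: "p * cnj p + q * cnj q = 1" "r * cnj p + s * cnj q = 0"
    unfolding M ctrans_mat2 mat2_mult mat2_one by auto
  from det have ps: "p * s - q * r = 1" unfolding M det_mat2 .
  have "s = s * (p * cnj p + q * cnj q)" using e(1) by simp
  also have "\<dots> = cnj p * (p * s - q * r) + q * (r * cnj p + s * cnj q)" by (simp add: algebra_simps)
  also have "\<dots> = cnj p" using ps e(2) by simp
  finally have s: "s = cnj p" .
  have "r = r * (p * cnj p + q * cnj q)" using e(1) by simp
  also have "\<dots> = p * (r * cnj p + s * cnj q) - cnj q * (p * s - q * r)" by (simp add: algebra_simps)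
  also have "\<dots> = - cnj q" using ps e(2) by simp
  finally have r: "r = - cnj q" .
  define v :: "real^3" where "v = vector [Im p, Re q, Im q]"
  have "M = quat (Re p) v"
    unfolding M quat_def s r v_def by (simp add: complex_eq_iff)
  moreover have "(Re p)\<^sup>2 + v \<bullet> v = 1"
    using e(1) by (simp add: v_def complex_eq_iff inner_vec_def sum_3 power2_eq_square)
  ultimately show "\<exists>w v. M = quat w v \<and> w\<^sup>2 + v \<bullet> v = 1" by blast
next
  assume "\<exists>w v. M = quat w v \<and> w\<^sup>2 + v \<bullet> v = 1"
  then obtain w v where M: "M = quat w v" and unit: "w\<^sup>2 + v \<bullet> v = 1" by blast
  have "det M = of_real (w\<^sup>2 + v \<bullet> v)"
    by (simp add: M quat_def det_mat2 complex_eq_iff inner_vec_def sum_3 power2_eq_square)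
  with unit have "det M = 1" by simp
  moreover have "M ** ctrans M = quat (w\<^sup>2 + v \<bullet> v) 0"
    by (simp add: M ctrans_quat quat_mult power2_eq_square)
  with unit have "M ** ctrans M = mat 1" by (simp add: mat_1_quat)
  ultimately show "M \<in> SU2" unfolding SU2_def by blast
qed

lemma SU2_mult: "X \<in> SU2 \<Longrightarrow> Y \<in> SU2 \<Longrightarrow> X ** Y \<in> SU2"
proof -
  assume X: "X \<in> SU2" and Y: "Y \<in> SU2"
  have "X ** Y ** ctrans (X ** Y) = X ** (Y ** ctrans Y) ** ctrans X"
    by (simp add: ctrans_mult matrix_mul_assoc)
  then show ?thesis using X Y by (simp add: SU2_def det_mul)
qed

lemma SU2_ctrans_mult: "X \<in> SU2 \<Longrightarrow> ctrans X ** X = mat 1"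
  by (simp add: SU2_def matrix_left_right_inverse)

lemma SU2_ctrans: "X \<in> SU2 \<Longrightarrow> ctrans X \<in> SU2"
  by (auto simp: SU2_iff_quat ctrans_quat)

lemma mat_1_SU2: "mat 1 \<in> SU2"
  by (auto simp: SU2_iff_quat mat_1_quat)

lemma trace_ctrans_SU2: "X \<in> SU2 \<Longrightarrow> trace (ctrans X) = trace X"
  by (auto simp: SU2_iff_quat ctrans_quat trace_quat)

definition quat_span_1j :: "cmat2 set" where
  "quat_span_1j = {quat w v | w v. v$1 = 0 \<and> v$3 = 0}"

definition quat_span_ik :: "cmat2 set" where
  "quat_span_ik = {quat 0 v | v. v$2 = 0}"

lemma eith_quat: "eith \<theta> = quat (cos \<theta>) (vector [0, sin \<theta>, 0])"
  by (simp add: eith_def quat_def complex_eq_iff)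

lemma iota_eith_quat: "iota ** eith \<theta> = quat 0 (vector [cos \<theta>, 0, sin \<theta>])"
  by (simp add: iota_def eith_def quat_def mat2_mult complex_eq_iff)

lemma Spin2_eq: "Spin2 = SU2 \<inter> quat_span_1j"
proof (intro set_eqI iffI)
  fix M assume "M \<in> Spin2"
  then show "M \<in> SU2 \<inter> quat_span_1j"
    by (auto simp: Spin2_def eith_quat SU2_iff_quat quat_span_1j_def inner_vec_def sum_3
        power2_eq_square)
next
  fix M assume "M \<in> SU2 \<inter> quat_span_1j"
  then obtain w v where M: "M = quat w v" and v: "v$1 = 0" "v$3 = 0" and "w\<^sup>2 + (v$2)\<^sup>2 = 1"
    by (auto simp: SU2_iff_quat quat_span_1j_def inner_vec_def sum_3 power2_eq_square)
  then obtain \<theta> where "w = cos \<theta>" "v$2 = sin \<theta>" using sincos_total_2pi by metis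
  with v have "v = vector [0, sin \<theta>, 0]" by (simp add: vec_eq_iff forall_3)
  with \<open>w = cos \<theta>\<close> have "M = eith \<theta>" by (simp add: M eith_quat)
  then show "M \<in> Spin2" by (simp add: Spin2_def)
qed

lemma Spin2_minus_eq: "Spin2_minus = SU2 \<inter> quat_span_ik"
proof (intro set_eqI iffI)
  fix M assume "M \<in> Spin2_minus"
  then show "M \<in> SU2 \<inter> quat_span_ik"
    by (auto simp: Spin2_minus_def iota_eith_quat SU2_iff_quat quat_span_ik_def inner_vec_def sum_3
        power2_eq_square)
next
  fix M assume "M \<in> SU2 \<inter> quat_span_ik"
  then obtain v where M: "M = quat 0 v" and v: "v$2 = 0" and "(v$1)\<^sup>2 + (v$3)\<^sup>2 = 1"
    by (auto simp: SU2_iff_quat quat_span_ik_def inner_vec_def sum_3 power2_eq_square)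
  then obtain \<theta> where "v$1 = cos \<theta>" "v$3 = sin \<theta>" using sincos_total_2pi by metis
  with v have "v = vector [cos \<theta>, 0, sin \<theta>]" by (simp add: vec_eq_iff forall_3)
  then have "M = iota ** eith \<theta>" by (simp add: M iota_eith_quat)
  then show "M \<in> Spin2_minus" by (simp add: Spin2_minus_def)
qed

lemma Pin2_eq: "Pin2 = SU2 \<inter> (quat_span_1j \<union> quat_span_ik)"
  by (auto simp: Pin2_def Spin2_eq Spin2_minus_eq)

lemma quat_span_mult:
  "X \<in> quat_span_1j \<Longrightarrow> Y \<in> quat_span_1j \<Longrightarrow> X ** Y \<in> quat_span_1j"
  "X \<in> quat_span_1j \<Longrightarrow> Y \<in> quat_span_ik \<Longrightarrow> X ** Y \<in> quat_span_ik"
  "X \<in> quat_span_ik \<Longrightarrow> Y \<in> quat_span_1j \<Longrightarrow> X ** Y \<in> quat_span_ik"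
  "X \<in> quat_span_ik \<Longrightarrow> Y \<in> quat_span_ik \<Longrightarrow> X ** Y \<in> quat_span_1j"
  by (auto simp: quat_span_1j_def quat_span_ik_def quat_mult cross3_def inner_vec_def sum_3)

lemma quat_span_ctrans:
  "X \<in> quat_span_1j \<Longrightarrow> ctrans X \<in> quat_span_1j"
  "X \<in> quat_span_ik \<Longrightarrow> ctrans X \<in> quat_span_ik"
  by (auto simp: quat_span_1j_def quat_span_ik_def ctrans_quat)

lemma mat_1_quat_span_1j: "mat 1 \<in> quat_span_1j"
  by (auto simp: quat_span_1j_def mat_1_quat)

lemma Spin2_disjoint_Spin2_minus: "Spin2 \<inter> Spin2_minus = {}"
  by (auto simp: Spin2_eq Spin2_minus_eq SU2_iff_quat quat_span_1j_def quat_span_ik_def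
      inner_vec_def sum_3)

lemma Spin2_closed:
  "X \<in> Spin2 \<Longrightarrow> Y \<in> Spin2 \<Longrightarrow> X ** Y \<in> Spin2" "X \<in> Spin2 \<Longrightarrow> ctrans X \<in> Spin2"
  "mat 1 \<in> Spin2"
  by (auto simp: Spin2_eq SU2_mult SU2_ctrans mat_1_SU2 quat_span_mult quat_span_ctrans
      mat_1_quat_span_1j)

lemma Pin2_closed:
  "X \<in> Pin2 \<Longrightarrow> Y \<in> Pin2 \<Longrightarrow> X ** Y \<in> Pin2" "X \<in> Pin2 \<Longrightarrow> ctrans X \<in> Pin2"
  "mat 1 \<in> Pin2"
  by (auto simp: Pin2_eq SU2_mult SU2_ctrans mat_1_SU2 quat_span_mult quat_span_ctrans
      mat_1_quat_span_1j)

lemma Spin2_minus_mult_iff: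
  assumes "X \<in> Pin2" "Y \<in> Pin2"
  shows "X ** Y \<in> Spin2_minus \<longleftrightarrow> (X \<in> Spin2_minus \<longleftrightarrow> Y \<notin> Spin2_minus)"
  using assms Spin2_disjoint_Spin2_minus Pin2_closed(1)[OF assms]
  by (auto simp: Pin2_def Spin2_eq Spin2_minus_eq SU2_mult quat_span_mult)

lemma trace_Spin2_minus: "X \<in> Spin2_minus \<Longrightarrow> trace X = 0"
  by (auto simp: Spin2_minus_def iota_eith_quat trace_quat)

definition conjugate :: "cmat2 \<Rightarrow> cmat2 \<Rightarrow> cmat2" where
  "conjugate g X = g ** X ** ctrans g"

lemma conjugate_mult: "g \<in> SU2 \<Longrightarrow> conjugate g (X ** Y) = conjugate g X ** conjugate g Y"
proof -
  assume g: "g \<in> SU2"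
  have "conjugate g X ** conjugate g Y = g ** X ** (ctrans g ** g) ** Y ** ctrans g"
    by (simp add: conjugate_def matrix_mul_assoc)
  then show ?thesis by (simp add: g SU2_ctrans_mult conjugate_def matrix_mul_assoc)
qed

lemma conjugate_ctrans: "conjugate g (ctrans X) = ctrans (conjugate g X)"
  by (simp add: conjugate_def ctrans_mult matrix_mul_assoc)

lemma conjugate_mat_1: "g \<in> SU2 \<Longrightarrow> conjugate g (mat 1) = mat 1"
  by (simp add: conjugate_def SU2_def)

lemma trace_conjugate: "g \<in> SU2 \<Longrightarrow> trace (conjugate g X) = trace X"
proof -
  assume g: "g \<in> SU2"
  have "trace (conjugate g X) = trace (ctrans g ** (g ** X))"
    unfolding conjugate_def by (rule trace_mul_sym)
  also have "\<dots> = trace ((ctrans g ** g) ** X)" by (simp only: matrix_mul_assoc)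
  also have "\<dots> = trace X" by (simp add: SU2_ctrans_mult g)
  finally show ?thesis .
qed

lemma SU2_conjugate: "g \<in> SU2 \<Longrightarrow> X \<in> SU2 \<Longrightarrow> conjugate g X \<in> SU2"
  by (simp add: conjugate_def SU2_mult SU2_ctrans)

lemma generators_in_rep_image: "{A, B, C, D} \<subseteq> rep_image A B C D"
  using rep_image.mul[OF rep_image.one] by auto

lemma is_G_rep_iff_generators:
  assumes mult_G: "\<And>X Y. X \<in> G \<Longrightarrow> Y \<in> G \<Longrightarrow> X ** Y \<in> G"
    and ctrans_G: "\<And>X. X \<in> G \<Longrightarrow> ctrans X \<in> G" and one_G: "mat 1 \<in> G"
  shows "is_G_rep G A B C D \<longleftrightarrow> (\<exists>g\<in>SU2. conjugate g ` {A, B, C, D} \<subseteq> G)"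
proof
  assume "is_G_rep G A B C D"
  then show "\<exists>g\<in>SU2. conjugate g ` {A, B, C, D} \<subseteq> G"
    using generators_in_rep_image unfolding is_G_rep_def conjugate_def by blast
next
  assume "\<exists>g\<in>SU2. conjugate g ` {A, B, C, D} \<subseteq> G"
  then obtain g where g: "g \<in> SU2" and gens: "conjugate g ` {A, B, C, D} \<subseteq> G" by blast
  have "conjugate g h \<in> G" if "h \<in> rep_image A B C D" for h
    using that
  proof induction
    case one
    then show ?case using g one_G by (simp add: conjugate_mat_1)
  next
    case (mul h X)
    with gens have "conjugate g X \<in> G" by blast
    with mul g mult_G show ?case by (simp add: conjugate_mult)
  next
    case (mulinv h X)
    with gens have "conjugate g X \<in> G" by blast
    with mulinv g mult_G ctrans_G show ?case by (simp add: conjugate_mult conjugate_ctrans)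
  qed
  with g show "is_G_rep G A B C D" unfolding is_G_rep_def conjugate_def by blast
qed

definition Pin2_trace_condition ::
    "complex \<Rightarrow> complex \<Rightarrow> complex \<Rightarrow> complex \<Rightarrow> complex \<Rightarrow> complex \<Rightarrow> complex \<Rightarrow> bool" where
  "Pin2_trace_condition a b c d x y z \<longleftrightarrow>
     (a = 0 \<and> b = 0 \<and> c = 0 \<and> d = 0) \<or>
     (a = 0 \<and> b = 0 \<and> y = 0 \<and> z = 0) \<or> (c = 0 \<and> d = 0 \<and> y = 0 \<and> z = 0) \<or>
     (a = 0 \<and> c = 0 \<and> x = 0 \<and> y = 0) \<or> (b = 0 \<and> d = 0 \<and> x = 0 \<and> y = 0) \<or>
     (a = 0 \<and> d = 0 \<and> x = 0 \<and> z = 0) \<or> (b = 0 \<and> c = 0 \<and> x = 0 \<and> z = 0)"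

lemma Pin2_trace_condition_if_not_Spin2:
  assumes prod: "A ** B ** C ** D = mat 1"
    and Pin2: "is_G_rep Pin2 A B C D" and not_Spin2: "\<not> is_G_rep Spin2 A B C D"
  shows "Pin2_trace_condition (trace A) (trace B) (trace C) (trace D)
           (trace (A ** B)) (trace (B ** C)) (trace (C ** A))"
proof -
  obtain g where g: "g \<in> SU2" and gens: "conjugate g ` {A, B, C, D} \<subseteq> Pin2"
    using Pin2 is_G_rep_iff_generators[OF Pin2_closed] by blast
  define odd where "odd X \<longleftrightarrow> conjugate g X \<in> Spin2_minus" for X
  have in_Pin2: "conjugate g X \<in> Pin2" if "X \<in> {A, B, C, D}" for X
    using gens that by blast
  have odd_mult: "conjugate g (X ** Y) \<in> Pin2 \<and> (odd (X ** Y) \<longleftrightarrow> (odd X \<longleftrightarrow> \<not> odd Y))"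
    if "conjugate g X \<in> Pin2" "conjugate g Y \<in> Pin2" for X Y
    using that Pin2_closed(1) Spin2_minus_mult_iff by (simp add: odd_def conjugate_mult g)
  have AB: "odd (A ** B) \<longleftrightarrow> (odd A \<longleftrightarrow> \<not> odd B)" and "conjugate g (A ** B) \<in> Pin2"
    using odd_mult in_Pin2 by simp_all
  then have ABC: "odd (A ** B ** C) \<longleftrightarrow> (odd (A ** B) \<longleftrightarrow> \<not> odd C)"
    and "conjugate g (A ** B ** C) \<in> Pin2"
    using odd_mult in_Pin2 by simp_all
  then have ABCD: "odd (A ** B ** C ** D) \<longleftrightarrow> (odd (A ** B ** C) \<longleftrightarrow> \<not> odd D)"
    using odd_mult in_Pin2 by simp
  have BC: "odd (B ** C) \<longleftrightarrow> (odd B \<longleftrightarrow> \<not> odd C)"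
    and CA: "odd (C ** A) \<longleftrightarrow> (odd C \<longleftrightarrow> \<not> odd A)"
    using odd_mult in_Pin2 by simp_all
  have even: "\<not> odd (A ** B ** C ** D)"
    using trace_Spin2_minus by (force simp: odd_def prod conjugate_mat_1 g trace_I)
  have some_odd: "odd A \<or> odd B \<or> odd C \<or> odd D"
    using not_Spin2 gens g is_G_rep_iff_generators[OF Spin2_closed, of A B C D]
    by (auto simp: odd_def Pin2_def)
  have traceless: "trace X = 0" if "odd X" for X
    using that trace_Spin2_minus trace_conjugate[OF g] by (metis odd_def)
  show ?thesis
    unfolding Pin2_trace_condition_def
    using traceless[of A] traceless[of B] traceless[of C] traceless[of D]
      traceless[of "A ** B"] traceless[of "B ** C"] traceless[of "C ** A"]
      AB ABC ABCD BC CA even some_odd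
    by (cases "odd A"; cases "odd B"; cases "odd C"; simp)
qed

lemma common_normal_exists:
  fixes u v w :: "real^3"
  assumes "u \<bullet> (v \<times> w) = 0"
  obtains n where "n \<noteq> 0" "n \<bullet> u = 0" "n \<bullet> v = 0" "n \<bullet> w = 0"
proof -
  let ?M = "vector [u, v, w] :: real^3^3"
  have "\<not> invertible ?M"
    using assms by (simp add: invertible_det_nz dot_cross_det)
  then obtain n where "?M *v n = 0" "n \<noteq> 0"
    using matrix_left_invertible_ker invertible_left_inverse by blast
  then show ?thesis
    using that by (simp add: vec_eq_iff forall_3 matrix_vector_mul_component inner_commute)
qed

lemma conjugate_axis_to_j:
  fixes n :: "real^3"
  assumes "n \<noteq> 0"
  obtains g where "g \<in> SU2"
    "\<And>w c. conjugate g (quat w (c *\<^sub>R n)) \<in> quat_span_1j"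
    "\<And>v. v \<bullet> n = 0 \<Longrightarrow> conjugate g (quat 0 v) \<in> quat_span_ik"
proof (cases "n$1 = 0 \<and> n$3 = 0")
  case True
  with assms have "n$2 \<noteq> 0" by (auto simp: vec_eq_iff forall_3)
  moreover have "conjugate (mat 1) X = X" for X
  proof -
    have "ctrans (mat 1) = (mat 1 :: cmat2)" by (simp add: mat_1_quat ctrans_quat)
    then show ?thesis by (simp add: conjugate_def)
  qed
  ultimately show ?thesis
    using that[OF mat_1_SU2] True
    by (auto simp: quat_span_1j_def quat_span_ik_def inner_vec_def sum_3)
next
  case False
  define L where "L = norm n"
  have L2: "L\<^sup>2 = (n$1)\<^sup>2 + (n$2)\<^sup>2 + (n$3)\<^sup>2"
    unfolding L_def power2_norm_eq_inner by (simp add: inner_vec_def sum_3 power2_eq_square)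
  have "0 < (n$1)\<^sup>2 + (n$3)\<^sup>2" using False by (simp add: sum_power2_gt_zero_iff)
  then have "\<bar>n$2\<bar>\<^sup>2 < L\<^sup>2" using L2 by simp
  then have "\<bar>n$2\<bar> < L" by (rule power2_less_imp_less) (simp add: L_def)
  then have pos: "0 < L + n$2" by linarith
  define N where "N = (L + n$2)\<^sup>2 + (n$1)\<^sup>2 + (n$3)\<^sup>2"
  have "0 < N" using pos by (simp add: N_def add_pos_nonneg)
  define k where "k = 1 / sqrt N"
  have k2: "k\<^sup>2 * N = 1" using \<open>0 < N\<close> by (simp add: k_def power_divide)
  \<comment> \<open>normalised |n| + n$2 + n \<times> j, the rotation taking n onto the positive j-axis\<close>
  define g where "g = quat (k * (L + n$2)) (k *\<^sub>R vector [- n$3, 0, n$1])"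
  have "g \<in> SU2"
    using k2 by (auto simp: g_def SU2_iff_quat N_def inner_vec_def sum_3 power2_eq_square
        algebra_simps)
  moreover have "conjugate g (quat w (c *\<^sub>R n)) \<in> quat_span_1j" for w c
    using L2 by (simp add: g_def conjugate_def quat_mult ctrans_quat quat_span_1j_def cross3_def
        inner_vec_def sum_3) algebra
  moreover have "conjugate g (quat 0 v) \<in> quat_span_ik" if "v \<bullet> n = 0" for v
    using L2 that by (simp add: g_def conjugate_def quat_mult ctrans_quat quat_span_ik_def
        cross3_def inner_vec_def sum_3) algebra
  ultimately show ?thesis using that by blast
qed

lemma traceless_SU2_is_pure: "X \<in> SU2 \<Longrightarrow> trace X = 0 \<Longrightarrow> \<exists>v. X = quat 0 v"
  by (auto simp: SU2_iff_quat trace_quat)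

lemma trace_quat_mult: "trace (quat w v ** quat w' v') = of_real (2 * (w * w' - v \<bullet> v'))"
  by (simp add: quat_mult trace_quat)

lemma trace_pure_quat_triple:
  "trace (quat 0 u ** quat 0 v ** quat 0 w) = of_real (- 2 * (u \<bullet> (v \<times> w)))"
  by (simp add: quat_mult trace_quat inner_vec_def sum_3 cross3_def algebra_simps)

lemma conjugate_into_Spin2_minus_if_traceless:
  assumes "X \<in> SU2" "Y \<in> SU2" "Z \<in> SU2" "trace X = 0" "trace Y = 0" "trace Z = 0"
    and "trace (X ** Y ** Z) = 0"
  obtains g where "g \<in> SU2" "conjugate g X \<in> Spin2_minus" "conjugate g Y \<in> Spin2_minus"
    "conjugate g Z \<in> Spin2_minus"
proof -
  obtain u v w where X: "X = quat 0 u" and Y: "Y = quat 0 v" and Z: "Z = quat 0 w"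
    using traceless_SU2_is_pure assms(1-6) by metis
  have "u \<bullet> (v \<times> w) = 0" using assms(7) by (simp add: X Y Z trace_pure_quat_triple)
  then obtain n where "n \<noteq> 0" "n \<bullet> u = 0" "n \<bullet> v = 0" "n \<bullet> w = 0"
    by (rule common_normal_exists)
  moreover obtain g where g: "g \<in> SU2"
    and ik: "\<And>v. v \<bullet> n = 0 \<Longrightarrow> conjugate g (quat 0 v) \<in> quat_span_ik"
    using conjugate_axis_to_j \<open>n \<noteq> 0\<close> by metis
  ultimately have "conjugate g X \<in> quat_span_ik" "conjugate g Y \<in> quat_span_ik"
    "conjugate g Z \<in> quat_span_ik"
    by (simp_all add: X Y Z inner_commute)
  with g assms(1-3) show ?thesis by (intro that) (auto simp: Spin2_minus_eq SU2_conjugate)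
qed

lemma conjugate_into_Pin2_if_orthogonal:
  assumes "X \<in> SU2" "Y \<in> SU2" "Z \<in> SU2" "trace X = 0" "trace Y = 0"
    and "trace (X ** Z) = 0" "trace (Y ** Z) = 0"
  obtains g where "g \<in> SU2" "conjugate g X \<in> Pin2" "conjugate g Y \<in> Pin2" "conjugate g Z \<in> Pin2"
proof -
  obtain u v where X: "X = quat 0 u" and Y: "Y = quat 0 v"
    using traceless_SU2_is_pure assms(1,2,4,5) by metis
  obtain w z where Z: "Z = quat w z" using assms(3) by (auto simp: SU2_iff_quat)
  have "u \<bullet> z = 0" "v \<bullet> z = 0" using assms(6,7) by (simp_all add: X Y Z trace_quat_mult)
  obtain n c where "n \<noteq> 0" "n \<bullet> u = 0" "n \<bullet> v = 0" "z = c *\<^sub>R n"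
  proof (cases "z = 0")
    case True
    obtain n where "n \<noteq> 0" "n \<bullet> u = 0" "n \<bullet> v = 0"
      using common_normal_exists[of u v 0] by auto
    with True show ?thesis using that[of n 0] by simp
  next
    case False
    with \<open>u \<bullet> z = 0\<close> \<open>v \<bullet> z = 0\<close> show ?thesis using that[of z 1] by (simp add: inner_commute)
  qed
  moreover obtain g where g: "g \<in> SU2"
    and "\<And>w c. conjugate g (quat w (c *\<^sub>R n)) \<in> quat_span_1j"
    and "\<And>v. v \<bullet> n = 0 \<Longrightarrow> conjugate g (quat 0 v) \<in> quat_span_ik"
    using conjugate_axis_to_j \<open>n \<noteq> 0\<close> by metis
  ultimately have "conjugate g X \<in> quat_span_ik" "conjugate g Y \<in> quat_span_ik"
    "conjugate g Z \<in> quat_span_1j"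
    by (simp_all add: X Y Z inner_commute)
  with g assms(1-3) show ?thesis by (intro that) (auto simp: Pin2_eq SU2_conjugate)
qed

lemma inverse_eq_ctrans: "X \<in> SU2 \<Longrightarrow> X ** Y = mat 1 \<Longrightarrow> Y = ctrans X"
proof -
  assume X: "X \<in> SU2" and XY: "X ** Y = mat 1"
  have "ctrans X = ctrans X ** (X ** Y)" using XY by simp
  also have "\<dots> = (ctrans X ** X) ** Y" by (simp add: matrix_mul_assoc)
  also have "\<dots> = Y" using X by (simp add: SU2_ctrans_mult)
  finally show ?thesis by simp
qed

lemma product_rotate:
  fixes X Y Z W :: cmat2
  shows "X ** Y ** Z ** W = mat 1 \<Longrightarrow> Y ** Z ** W ** X = mat 1"
proof -
  assume "X ** Y ** Z ** W = mat 1"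
  then have "X ** (Y ** Z ** W) = mat 1" by (simp add: matrix_mul_assoc)
  then show "Y ** Z ** W ** X = mat 1" by (rule matrix_left_right_inverse[THEN iffD1])
qed

lemma generator_eq_ctrans:
  assumes "A \<in> SU2" "B \<in> SU2" "C \<in> SU2" "A ** B ** C ** D = mat 1"
  shows "D = ctrans (A ** B ** C)"
  using assms by (intro inverse_eq_ctrans) (simp_all add: SU2_mult)

lemma trace_relations:
  assumes su: "A \<in> SU2" "B \<in> SU2" "C \<in> SU2" "D \<in> SU2" and prod: "A ** B ** C ** D = mat 1"
  shows "trace D = trace (A ** B ** C)" "trace (C ** D) = trace (A ** B)"
    "trace (D ** A) = trace (B ** C)"
proof -
  show "trace D = trace (A ** B ** C)"
    using generator_eq_ctrans[OF su(1-3) prod] by (simp add: trace_ctrans_SU2 SU2_mult su)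
  have "(A ** B) ** (C ** D) = mat 1" using prod by (simp add: matrix_mul_assoc)
  then show "trace (C ** D) = trace (A ** B)"
    using inverse_eq_ctrans by (metis trace_ctrans_SU2 SU2_mult su(1,2))
  have "(B ** C) ** (D ** A) = mat 1" using product_rotate[OF prod] by (simp add: matrix_mul_assoc)
  then show "trace (D ** A) = trace (B ** C)"
    using inverse_eq_ctrans by (metis trace_ctrans_SU2 SU2_mult su(2,3))
qed

lemma is_G_rep_Pin2_if_three_conjugate:
  assumes su: "A \<in> SU2" "B \<in> SU2" "C \<in> SU2" "D \<in> SU2" and prod: "A ** B ** C ** D = mat 1"
    and g: "g \<in> SU2" and S: "S \<in> {{A, B, C}, {B, C, D}, {C, D, A}, {D, A, B}}"
    and Pin2: "\<And>X. X \<in> S \<Longrightarrow> conjugate g X \<in> Pin2"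
  shows "is_G_rep Pin2 A B C D"
proof -
  have inv: "conjugate g (ctrans (X ** Y ** Z)) \<in> Pin2" if "X \<in> S" "Y \<in> S" "Z \<in> S" for X Y Z
    using that Pin2 Pin2_closed by (simp add: conjugate_ctrans conjugate_mult g)
  have prods: "A ** B ** C ** D = mat 1" "B ** C ** D ** A = mat 1" "C ** D ** A ** B = mat 1"
    "D ** A ** B ** C = mat 1"
    using prod product_rotate by blast+
  have "conjugate g ` {A, B, C, D} \<subseteq> Pin2"
    using S
  proof (elim insertE emptyE)
    assume "S = {A, B, C}"
    then show ?thesis using Pin2 inv[of A B C] generator_eq_ctrans[OF su(1-3) prods(1)] by auto
  next
    assume "S = {B, C, D}"
    then show ?thesis using Pin2 inv[of B C D] generator_eq_ctrans[OF su(2-4) prods(2)] by auto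
  next
    assume "S = {C, D, A}"
    then show ?thesis
      using Pin2 inv[of C D A] generator_eq_ctrans[OF su(3,4,1) prods(3)] by auto
  next
    assume "S = {D, A, B}"
    then show ?thesis
      using Pin2 inv[of D A B] generator_eq_ctrans[OF su(4,1,2) prods(4)] by auto
  qed
  then show ?thesis using is_G_rep_iff_generators[OF Pin2_closed] g by blast
qed

lemma Pin2_rep_if_orthogonal_triple:
  assumes su: "A \<in> SU2" "B \<in> SU2" "C \<in> SU2" "D \<in> SU2" and prod: "A ** B ** C ** D = mat 1"
    and S: "{X, Y, Z} \<in> {{A, B, C}, {B, C, D}, {C, D, A}, {D, A, B}}"
    and "trace X = 0" "trace Y = 0" "trace (X ** Z) = 0" "trace (Y ** Z) = 0"
  shows "is_G_rep Pin2 A B C D"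
proof -
  have "X \<in> SU2" "Y \<in> SU2" "Z \<in> SU2" using S su by auto
  then obtain g where "g \<in> SU2" "conjugate g X \<in> Pin2" "conjugate g Y \<in> Pin2" "conjugate g Z \<in> Pin2"
    using conjugate_into_Pin2_if_orthogonal assms(7-10) by metis
  then show ?thesis using is_G_rep_Pin2_if_three_conjugate[OF su prod _ S] by blast
qed

lemma Pin2_rep_if_traceless:
  assumes su: "A \<in> SU2" "B \<in> SU2" "C \<in> SU2" "D \<in> SU2" and prod: "A ** B ** C ** D = mat 1"
    and "trace A = 0" "trace B = 0" "trace C = 0" "trace D = 0"
  shows "is_G_rep Pin2 A B C D"
proof -
  have "trace (A ** B ** C) = 0" using assms trace_relations(1)[OF su prod] by simp
  then obtain g where g: "g \<in> SU2" and "conjugate g A \<in> Spin2_minus" "conjugate g B \<in> Spin2_minus"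
    "conjugate g C \<in> Spin2_minus"
    using conjugate_into_Spin2_minus_if_traceless[OF su(1-3) assms(6-8)] by blast
  then show ?thesis
    by (intro is_G_rep_Pin2_if_three_conjugate[OF su prod g, of "{A, B, C}"]) (auto simp: Pin2_def)
qed

lemma Pin2_rep_if_trace_condition:
  assumes su: "A \<in> SU2" "B \<in> SU2" "C \<in> SU2" "D \<in> SU2" and prod: "A ** B ** C ** D = mat 1"
    and "Pin2_trace_condition (trace A) (trace B) (trace C) (trace D)
           (trace (A ** B)) (trace (B ** C)) (trace (C ** A))"
  shows "is_G_rep Pin2 A B C D"
  using assms(6) unfolding Pin2_trace_condition_def
proof (elim disjE conjE)
  note orthogonal = Pin2_rep_if_orthogonal_triple[OF su prod]
  note tr = trace_relations[OF su prod] trace_mul_sym[of A C] trace_mul_sym[of C B]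
    trace_mul_sym[of B A] trace_mul_sym[of D C]
  show "is_G_rep Pin2 A B C D" if "trace A = 0" "trace B = 0" "trace C = 0" "trace D = 0"
    using Pin2_rep_if_traceless[OF su prod that] .
  show "is_G_rep Pin2 A B C D" if "trace A = 0" "trace B = 0" "trace (B ** C) = 0" "trace (C ** A) = 0"
    using that tr by (intro orthogonal[of A B C]) simp_all
  show "is_G_rep Pin2 A B C D" if "trace C = 0" "trace D = 0" "trace (B ** C) = 0" "trace (C ** A) = 0"
    using that tr by (intro orthogonal[of C D A]) simp_all
  show "is_G_rep Pin2 A B C D" if "trace A = 0" "trace C = 0" "trace (A ** B) = 0" "trace (B ** C) = 0"
    using that tr by (intro orthogonal[of A C B]) (simp_all add: insert_commute)
  show "is_G_rep Pin2 A B C D" if "trace B = 0" "trace D = 0" "trace (A ** B) = 0" "trace (B ** C) = 0"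
    using that tr by (intro orthogonal[of B D C]) (simp_all add: insert_commute)
  show "is_G_rep Pin2 A B C D" if "trace A = 0" "trace D = 0" "trace (A ** B) = 0" "trace (C ** A) = 0"
    using that tr by (intro orthogonal[of A D C]) (simp_all add: insert_commute)
  show "is_G_rep Pin2 A B C D" if "trace B = 0" "trace C = 0" "trace (A ** B) = 0" "trace (C ** A) = 0"
    using that tr by (intro orthogonal[of B C A]) (simp_all add: insert_commute)
qed

theorem proposition3p2:
  fixes a b c d :: real and A B C D :: cmat2 and x y z :: complex
  assumes kappa: "a \<in> {-2..2}" "b \<in> {-2..2}" "c \<in> {-2..2}" "d \<in> {-2..2}"
    and rho: "(A, B, C, D) \<in> H_kappa a b c d"
    and xyz: "x = trace (A ** B)" "y = trace (B ** C)" "z = trace (C ** A)"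
  shows "(is_G_rep Pin2 A B C D \<and> \<not> is_G_rep Spin2 A B C D \<longrightarrow>
            ((a = 0 \<and> b = 0 \<and> c = 0 \<and> d = 0) \<or>
             ((a = 0 \<and> b = 0 \<and> y = 0 \<and> z = 0) \<or> (c = 0 \<and> d = 0 \<and> y = 0 \<and> z = 0) \<or>
              (a = 0 \<and> c = 0 \<and> x = 0 \<and> y = 0) \<or> (b = 0 \<and> d = 0 \<and> x = 0 \<and> y = 0) \<or>
              (a = 0 \<and> d = 0 \<and> x = 0 \<and> z = 0) \<or> (b = 0 \<and> c = 0 \<and> x = 0 \<and> z = 0))))
       \<and> (((a = 0 \<and> b = 0 \<and> c = 0 \<and> d = 0) \<or>
             ((a = 0 \<and> b = 0 \<and> y = 0 \<and> z = 0) \<or> (c = 0 \<and> d = 0 \<and> y = 0 \<and> z = 0) \<or>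
              (a = 0 \<and> c = 0 \<and> x = 0 \<and> y = 0) \<or> (b = 0 \<and> d = 0 \<and> x = 0 \<and> y = 0) \<or>
              (a = 0 \<and> d = 0 \<and> x = 0 \<and> z = 0) \<or> (b = 0 \<and> c = 0 \<and> x = 0 \<and> z = 0)))
          \<longrightarrow> is_G_rep Pin2 A B C D)"
proof -
  from rho have su: "A \<in> SU2" "B \<in> SU2" "C \<in> SU2" "D \<in> SU2"
    and prod: "A ** B ** C ** D = mat 1"
    and tr: "trace A = of_real a" "trace B = of_real b" "trace C = of_real c" "trace D = of_real d"
    unfolding H_kappa_def by auto
  show ?thesis
    using Pin2_trace_condition_if_not_Spin2[OF prod] Pin2_rep_if_trace_condition[OF su prod]
    unfolding Pin2_trace_condition_def tr xyz[symmetric] of_real_eq_0_iff by argo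
qed

end
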